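(* Let $d=m=1$, $n=0$ (state space $\mathbb R_+$), let $\mu=\sum_{n=1}^\infty n^{-2}\delta_n$ (with $\delta_n$ the Dirac measure at $n$), and $\beta_1=\int_0^\infty h(\xi)\,\mu(d\xi)=\sum_{n\ge1}n^{-2}$. Then the parameters $\alpha=(0,0)$, $\beta=(0,\beta_1)$, $\gamma=(0,0)$, $\kappa=(0,\mu)$ are admissible, the associated stochastically continuous affine process satisfies $\int_0^\infty(|\xi|\wedge|\xi|^2)\,\mu(d\xi)=\infty$, and yet it is conservative. In fact $R_0\equiv0$, $R_1(u)=\sum_{n\ge1}(e^{un}-1)/n^2$ for $u\le0$, and $\int_{-1}^{0-}\frac{du}{R_1(u)}=-\infty$.
   Context: For $d=1$, $m=1$: truncation function $h(\xi)=(1\wedge|\xi|)\xi/|\xi|$ for $\xi\ne0$. Admissible parameters $(\alpha,\beta,\gamma,\kappa)$ here consist of $\alpha_0,\alpha_1\ge0$, $\beta_0,\beta_1\in\mathbb R$ with $\beta_0-\int h\,d\kappa_0\ge0$ (and $\int |h|\,d\kappa_0<\infty$), $\gamma_0,\gamma_1\ge0$, and Borel measures $\kappa_0,\kappa_1$ on $(0,\infty)$ with $\int |h|^2 d\kappa_j<\infty$; $R_i(u)=\frac12\alpha_iu^2+\beta_iu-\gamma_i+\int(e^{u\xi}-1-uh(\xi))\kappa_i(d\xi)$. Each admissible parameter set determines a unique stochastically continuous affine Markov process $(X,\mathbb P_x)_{x\in\mathbb R_+}$ (possibly killed, with values in $\mathbb R_+\cup\{\Delta\}$) whose transition function satisfies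 $\int e^{u\xi}p_t(x,d\xi)=\exp(\psi_0(t,u)+\psi(t,u)x)$ with $\partial_t\psi=R_1(\psi)$, $\psi(0,u)=u$, $\partial_t\psi_0=R_0(\psi)$, $\psi_0(0,u)=0$. The process is conservative if $p_t(x,\mathbb R_+)=1$ for all $t,x$. *)

theory Defs
  imports "HOL-Analysis.Analysis"
begin

definition h :: "real \<Rightarrow> real" where
  "h \<xi> = min 1 \<bar>\<xi>\<bar> * sgn \<xi>"

definition admissible ::
  "real \<Rightarrow> real \<Rightarrow> real \<Rightarrow> real \<Rightarrow> real \<Rightarrow> real \<Rightarrow> real measure \<Rightarrow> real measure \<Rightarrow> bool" where
  "admissible \<alpha>0 \<alpha>1 \<beta>0 \<beta>1 \<gamma>0 \<gamma>1 \<kappa>0 \<kappa>1 \<longleftrightarrow>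
     \<alpha>0 \<ge> 0 \<and> \<alpha>1 \<ge> 0 \<and> \<gamma>0 \<ge> 0 \<and> \<gamma>1 \<ge> 0 \<and>
     (\<forall>\<kappa> \<in> {\<kappa>0, \<kappa>1}. sets \<kappa> = sets borel \<and> emeasure \<kappa> (UNIV - {0<..}) = 0 \<and>
        (\<integral>\<^sup>+\<xi>. ennreal ((h \<xi>)\<^sup>2) \<partial>\<kappa>) < \<infinity>) \<and>
     (\<integral>\<^sup>+\<xi>. ennreal \<bar>h \<xi>\<bar> \<partial>\<kappa>0) < \<infinity> \<and>
     \<beta>0 - (\<integral>\<xi>. h \<xi> \<partial>\<kappa>0) \<ge> 0"

definition R :: "real \<Rightarrow> real \<Rightarrow> real \<Rightarrow> real measure \<Rightarrow> real \<Rightarrow> real" where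
  "R \<alpha> \<beta> \<gamma> \<kappa> u = \<alpha> / 2 * u\<^sup>2 + \<beta> * u - \<gamma> + (\<integral>\<xi>. exp (u * \<xi>) - 1 - u * h \<xi> \<partial>\<kappa>)"

text \<open>p is a (sub-Markov, possibly killed) transition function on R_+ of the affine process
  with parameters (alpha, beta, gamma, kappa): p t x is a sub-probability measure on R_+
  (mass missing = killing), whose Laplace transform is exp(psi0(t,u) + psi(t,u) x) for u \<le> 0,
  where psi, psi0 solve the generalized Riccati equations.\<close>
definition affine_transition ::
  "real \<Rightarrow> real \<Rightarrow> real \<Rightarrow> real \<Rightarrow> real \<Rightarrow> real \<Rightarrow> real measure \<Rightarrow> real measure \<Rightarrow>
   (real \<Rightarrow> real \<Rightarrow> real measure) \<Rightarrow> (real \<Rightarrow> real \<Rightarrow> real) \<Rightarrow> (real \<Rightarrow> real \<Rightarrow> real) \<Rightarrow> bool" where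
  "affine_transition \<alpha>0 \<alpha>1 \<beta>0 \<beta>1 \<gamma>0 \<gamma>1 \<kappa>0 \<kappa>1 p \<psi>0 \<psi> \<longleftrightarrow>
     (\<forall>u \<le> 0. \<psi> 0 u = u \<and> \<psi>0 0 u = 0 \<and>
        (\<forall>t \<ge> 0. ((\<lambda>s. \<psi> s u) has_real_derivative R \<alpha>1 \<beta>1 \<gamma>1 \<kappa>1 (\<psi> t u)) (at t within {0..}) \<and>
                  ((\<lambda>s. \<psi>0 s u) has_real_derivative R \<alpha>0 \<beta>0 \<gamma>0 \<kappa>0 (\<psi> t u)) (at t within {0..}))) \<and>
     (\<forall>t \<ge> 0. \<forall>x \<ge> 0.
        sets (p t x) = sets borel \<and> emeasure (p t x) (UNIV - {0..}) = 0 \<and> emeasure (p t x) UNIV \<le> 1 \<and>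
        (\<forall>u \<le> 0. (\<integral>\<xi>. exp (u * \<xi>) \<partial>(p t x)) = exp (\<psi>0 t u + \<psi> t u * x)))"

definition conservative :: "(real \<Rightarrow> real \<Rightarrow> real measure) \<Rightarrow> bool" where
  "conservative p \<longleftrightarrow> (\<forall>t \<ge> 0. \<forall>x \<ge> 0. emeasure (p t x) {0..} = 1)"

text \<open>mu = sum_{n \<ge> 1} n^(-2) delta_n, as a Borel measure on the reals.\<close>
definition mu :: "real measure" where
  "mu = distr (density (count_space {1::nat..}) (\<lambda>n. ennreal (1 / (real n)\<^sup>2))) borel real"

definition beta1 :: real where
  "beta1 = (\<Sum>n. 1 / (real (Suc n))\<^sup>2)"

end

theory Submission
  imports Defs
begin

(*
  The proof rests on an
  Osgood-type estimate for R_1 near 0: with the log-Lipschitz modulus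
  omega(x) = x (1 - ln x) one has  -3 omega(-u) <= R_1(u) < 0  for -1 <= u < 0.

  1. Integrals against mu are series over n >= 1; this gives the closed form of R_1,
     the admissibility of the parameters and the divergence of the moment integral.
  2. A splitting of the series at n ~ 1/|u| (harmonic head, inverse-square tail)
     yields the omega-bound for R_1, and uniform convergence gives its continuity.
  3. Two general facts about the modulus omega, whose reciprocal is not integrable at 0
     (ln (1 - ln x) is a primitive): any right-hand side F bounded below by -K omega
     forces the solution of phi' = F(phi), phi(0) = 0, phi <= 0 to vanish identically
     (Osgood uniqueness), and makes the integral of 1/F diverge at 0-.
  4. The total mass of p t x is exp (psi0 t 0 + psi t 0 x); since R_0 = 0 and psi(.,0)
     solves the Riccati equation with psi <= 0, uniqueness gives psi(.,0) = 0, hence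
     conservativeness.
*)

section \<open>Integration against mu\<close>

lemma bij_Suc_atLeast1: "bij_betw Suc (UNIV::nat set) {1..}"
  by (rule bij_betw_imageI) (auto simp: image_iff Suc_le_eq gr0_conv_Suc)

lemma nn_integral_mu:
  assumes [measurable]: "g \<in> borel_measurable borel"
  shows "(\<integral>\<^sup>+x. g x \<partial>mu) = (\<Sum>n. ennreal (1 / (real (Suc n))\<^sup>2) * g (real (Suc n)))"
proof -
  have "(\<integral>\<^sup>+x. g x \<partial>mu) =
      (\<integral>\<^sup>+n. ennreal (1 / (real n)\<^sup>2) * g (real n) \<partial>count_space {1::nat..})"
    unfolding mu_def by (simp add: nn_integral_distr nn_integral_density)
  also have "\<dots> = (\<integral>\<^sup>+n. ennreal (1 / (real (Suc n))\<^sup>2) * g (real (Suc n)) \<partial>count_space UNIV)"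
    using nn_integral_bij_count_space[OF bij_Suc_atLeast1,
        of "\<lambda>n. ennreal (1 / (real n)\<^sup>2) * g (real n)"] by simp
  finally show ?thesis by (simp add: nn_integral_count_space_nat)
qed

lemma integral_mu:
  fixes f :: "real \<Rightarrow> real"
  assumes [measurable]: "f \<in> borel_measurable borel"
    and abs_summable: "summable (\<lambda>n. \<bar>f (real (Suc n))\<bar> / (real (Suc n))\<^sup>2)"
  shows "integral\<^sup>L mu f = (\<Sum>n. f (real (Suc n)) / (real (Suc n))\<^sup>2)"
proof -
  let ?w = "\<lambda>n::nat. (1 / (real n)\<^sup>2) *\<^sub>R f (real n)"
  have "integral\<^sup>L mu f = integral\<^sup>L (count_space {1..}) ?w"
    unfolding mu_def by (simp add: integral_distr integral_density)
  also have "\<dots> = integral\<^sup>L (count_space UNIV) (\<lambda>n. ?w (Suc n))"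
    using integral_bij_count_space[OF bij_Suc_atLeast1, of ?w] by simp
  also have "\<dots> = (\<Sum>n. ?w (Suc n))"
    by (rule integral_count_space_nat)
       (use abs_summable in \<open>simp add: integrable_count_space_nat_iff abs_mult\<close>)
  finally show ?thesis by simp
qed

lemma summable_inverse_Suc_squared: "summable (\<lambda>n. 1 / (real (Suc n))\<^sup>2)"
  using summable_Suc_iff[THEN iffD2, OF inverse_power_summable[of 2, where 'a=real]]
  by (simp add: inverse_eq_divide)

lemma h_measurable [measurable]: "h \<in> borel_measurable borel"
  unfolding h_def by measurable

lemma h_Suc: "h (real (Suc n)) = 1"
  unfolding h_def by simp

lemma integral_h_mu: "(\<integral>\<xi>. h \<xi> \<partial>mu) = beta1"
  unfolding beta1_def
  by (subst integral_mu) (use summable_inverse_Suc_squared in \<open>simp_all add: h_def\<close>)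

lemma admissible_mu: "admissible 0 0 0 beta1 0 0 (null_measure borel) mu"
proof -
  have "real -` (UNIV - {0<..}) \<inter> {1::nat..} = {}" by auto
  then have support: "emeasure mu (UNIV - {0<..}) = 0"
    unfolding mu_def by (subst emeasure_distr) auto
  have "(\<integral>\<^sup>+\<xi>. ennreal ((h \<xi>)\<^sup>2) \<partial>mu) =
      (\<Sum>n. ennreal (1 / (real (Suc n))\<^sup>2) * ennreal ((h (real (Suc n)))\<^sup>2))"
    by (rule nn_integral_mu) measurable
  also have "\<dots> = (\<Sum>n. ennreal (1 / (real (Suc n))\<^sup>2))"
    by (simp only: h_Suc) simp
  also have "\<dots> = ennreal beta1"
    unfolding beta1_def by (rule suminf_ennreal2) (use summable_inverse_Suc_squared in auto)
  finally have square_h: "(\<integral>\<^sup>+\<xi>. ennreal ((h \<xi>)\<^sup>2) \<partial>mu) < \<infinity>"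
    by simp
  have "sets mu = sets borel"
    unfolding mu_def by simp
  then show ?thesis
    unfolding admissible_def using support square_h integral_h_mu by simp
qed

text \<open>On the atoms min |xi| xi^2 = xi, so the moment integral is the harmonic series.\<close>
lemma nn_integral_mu_moment: "(\<integral>\<^sup>+\<xi>. ennreal (min \<bar>\<xi>\<bar> (\<xi>\<^sup>2)) \<partial>mu) = \<infinity>"
proof -
  have on_atoms: "ennreal (1 / (real (Suc n))\<^sup>2) * ennreal (min \<bar>real (Suc n)\<bar> ((real (Suc n))\<^sup>2))
      = ennreal (1 / real (Suc n))" for n
    by (simp add: ennreal_mult'[symmetric] power2_eq_square del: of_nat_Suc)
  have "\<not> summable (\<lambda>n. 1 / real (Suc n))"
    using not_summable_harmonic summable_Suc_iff[of "\<lambda>n. inverse (real n)"]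
    by (simp add: inverse_eq_divide)
  then have diverges: "(\<Sum>n. ennreal (1 / real (Suc n))) = \<infinity>"
    using summable_suminf_not_top[of "\<lambda>n. 1 / real (Suc n)"] by fastforce
  have "(\<integral>\<^sup>+\<xi>. ennreal (min \<bar>\<xi>\<bar> (\<xi>\<^sup>2)) \<partial>mu) =
      (\<Sum>n. ennreal (1 / (real (Suc n))\<^sup>2) * ennreal (min \<bar>real (Suc n)\<bar> ((real (Suc n))\<^sup>2)))"
    by (rule nn_integral_mu) measurable
  also have "\<dots> = (\<Sum>n. ennreal (1 / real (Suc n)))"
    by (simp only: on_atoms)
  finally show ?thesis using diverges by simp
qed

section \<open>The function R_1 as a series\<close>

definition R1_series :: "real \<Rightarrow> real" where
  "R1_series u = (\<Sum>n. (exp (u * real (Suc n)) - 1) / (real (Suc n))\<^sup>2)"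

lemma R1_term_bound:
  assumes "u \<le> 0"
  shows "norm ((exp (u * real (Suc n)) - 1) / (real (Suc n))\<^sup>2) \<le> 1 / (real (Suc n))\<^sup>2"
proof -
  have "exp (u * real (Suc n)) \<le> 1" using assms by (simp add: mult_nonpos_nonneg)
  then have "\<bar>exp (u * real (Suc n)) - 1\<bar> \<le> 1" using exp_gt_zero[of "u * real (Suc n)"] by linarith
  then show ?thesis by (simp add: divide_right_mono)
qed

lemma R1_series_summable:
  "u \<le> 0 \<Longrightarrow> summable (\<lambda>n. (exp (u * real (Suc n)) - 1) / (real (Suc n))\<^sup>2)"
  by (rule summable_comparison_test[OF _ summable_inverse_Suc_squared]) (use R1_term_bound in blast)

lemma R1_series_continuous: "continuous_on {..0} R1_series"
proof -
  have "uniform_limit {..0} (\<lambda>n u. \<Sum>i<n. (exp (u * real (Suc i)) - 1) / (real (Suc i))\<^sup>2)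
      R1_series sequentially"
    unfolding R1_series_def[abs_def]
    by (rule Weierstrass_m_test[OF _ summable_inverse_Suc_squared]) (rule R1_term_bound, simp)
  then show ?thesis
    by (rule uniform_limit_theorem[rotated]) (auto intro!: always_eventually continuous_intros)
qed

text \<open>Integrating against mu termwise: the compensator beta1 u cancels the h-part.\<close>
lemma R1_eq_series:
  assumes u: "u \<le> 0"
  shows "R 0 beta1 0 mu u = R1_series u"
proof -
  define f where "f \<xi> = exp (u * \<xi>) - 1 - u * h \<xi>" for \<xi>
  have f_Suc: "f (real (Suc n)) = (exp (u * real (Suc n)) - 1) - u" for n
    unfolding f_def h_def by simp
  have "summable (\<lambda>n. \<bar>f (real (Suc n))\<bar> / (real (Suc n))\<^sup>2)"
  proof (rule summable_comparison_test[OF _ summable_mult[OF summable_inverse_Suc_squared, of "1 - u"]])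
    have "\<bar>f (real (Suc n))\<bar> \<le> 1 - u" for n
    proof -
      have "0 < exp (u * real (Suc n))" "exp (u * real (Suc n)) \<le> 1"
        using u by (simp_all add: mult_nonpos_nonneg)
      then show ?thesis unfolding f_Suc using u by linarith
    qed
    then show "\<exists>N. \<forall>n\<ge>N. norm (\<bar>f (real (Suc n))\<bar> / (real (Suc n))\<^sup>2) \<le> (1 - u) * (1 / (real (Suc n))\<^sup>2)"
      by (auto simp: divide_right_mono)
  qed
  moreover have "f \<in> borel_measurable borel"
    unfolding f_def by measurable
  ultimately have "integral\<^sup>L mu f = (\<Sum>n. f (real (Suc n)) / (real (Suc n))\<^sup>2)"
    by (intro integral_mu)
  also have "\<dots> = R1_series u - u * beta1"
  proof (rule sums_unique[symmetric])
    have "(\<lambda>n. (exp (u * real (Suc n)) - 1) / (real (Suc n))\<^sup>2 - u * (1 / (real (Suc n))\<^sup>2))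
        sums (R1_series u - u * beta1)"
      unfolding R1_series_def beta1_def
      by (intro sums_diff sums_mult summable_sums R1_series_summable u summable_inverse_Suc_squared)
    then show "(\<lambda>n. f (real (Suc n)) / (real (Suc n))\<^sup>2) sums (R1_series u - u * beta1)"
      unfolding f_Suc by (simp add: diff_divide_distrib)
  qed
  finally show ?thesis unfolding R_def f_def[abs_def] by simp
qed

section \<open>The log-Lipschitz estimate for R_1\<close>

text \<open>The Osgood modulus omega(x) = x (1 - ln x); 1/omega is not integrable at 0.\<close>
definition logmod :: "real \<Rightarrow> real" where
  "logmod x = x * (1 - ln x)"

lemma one_minus_ln_pos:
  fixes x :: real
  assumes "0 < x" "x \<le> 1"
  shows "0 < 1 - ln x"
proof -
  have "ln x \<le> 0" using assms by simp
  then show ?thesis by simp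
qed

lemma logmod_pos: "0 < x \<Longrightarrow> x \<le> 1 \<Longrightarrow> 0 < logmod x"
  unfolding logmod_def using one_minus_ln_pos by simp

lemma inverse_square_tail_le:
  assumes "N \<ge> 1"
  shows "(\<Sum>n. 1 / (real (Suc (n + N)))\<^sup>2) \<le> 1 / real N"
proof -
  define f where "f n = 1 / real (n + N)" for n
  have "f \<longlonglongrightarrow> 0"
    unfolding f_def using LIMSEQ_ignore_initial_segment[OF lim_inverse_n', of N] by simp
  then have telescope: "(\<lambda>n. f n - f (Suc n)) sums f 0"
    using telescope_sums'[of f 0] by simp
  have "1 / (real (Suc (n + N)))\<^sup>2 \<le> f n - f (Suc n)" for n
  proof -
    have "1 / (real (Suc (n + N)))\<^sup>2 \<le> 1 / (real (n + N) * real (Suc (n + N)))"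
      using assms by (intro divide_left_mono) (auto simp: power2_eq_square)
    also have "\<dots> = f n - f (Suc n)"
      unfolding f_def using assms by (simp add: field_simps)
    finally show ?thesis .
  qed
  moreover have "summable (\<lambda>n. 1 / (real (Suc (n + N)))\<^sup>2)"
    using summable_ignore_initial_segment[OF summable_inverse_Suc_squared, of N] by simp
  ultimately have "(\<Sum>n. 1 / (real (Suc (n + N)))\<^sup>2) \<le> (\<Sum>n. f n - f (Suc n))"
    by (intro suminf_le sums_summable[OF telescope]) auto
  then show ?thesis using sums_unique[OF telescope] by (simp add: f_def)
qed

text \<open>Since 1 - exp (-un) <= un, the first N terms of the series sum to at most u * harm N.\<close>
lemma exp_series_head_le_harm:
  assumes "0 \<le> u"
  shows "(\<Sum>i<N. (1 - exp (- u * real (Suc i))) / (real (Suc i))\<^sup>2) \<le> u * harm N"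
proof -
  have "(1 - exp (- u * real (Suc i))) / (real (Suc i))\<^sup>2 \<le> u * inverse (real (Suc i))" for i
  proof -
    have "1 - exp (- u * real (Suc i)) \<le> u * real (Suc i)"
      using exp_ge_add_one_self[of "- u * real (Suc i)"] by simp
    then have "(1 - exp (- u * real (Suc i))) / (real (Suc i))\<^sup>2 \<le> (u * real (Suc i)) / (real (Suc i))\<^sup>2"
      by (simp add: divide_right_mono)
    also have "\<dots> = u * inverse (real (Suc i))"
      by (simp add: power2_eq_square divide_inverse del: of_nat_Suc)
    finally show ?thesis .
  qed
  then have "(\<Sum>i<N. (1 - exp (- u * real (Suc i))) / (real (Suc i))\<^sup>2) \<le> (\<Sum>i<N. u * inverse (real (Suc i)))"
    by (intro sum_mono)
  also have "\<dots> = u * harm N"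
    by (simp add: harm_altdef sum_distrib_left)
  finally show ?thesis .
qed

text \<open>Split at N = floor(1/u): the head is at most u * harm N <= u (1 - ln u),
  the tail at most 1/N <= 2u.\<close>
lemma R1_series_neg_bound:
  assumes "0 < u" "u \<le> 1"
  shows "(\<Sum>n. (1 - exp (- u * real (Suc n))) / (real (Suc n))\<^sup>2) \<le> 3 * logmod u"
proof -
  define t where "t n = (1 - exp (- u * real (Suc n))) / (real (Suc n))\<^sup>2" for n
  define N where "N = nat \<lfloor>1/u\<rfloor>"
  have "1 \<le> \<lfloor>1/u\<rfloor>" using assms by (simp add: le_floor_iff)
  then have N: "N \<ge> 1" "real N \<le> 1/u" "1/u < real N + 1"
    unfolding N_def by linarith+
  have t_le: "t n \<le> 1 / (real (Suc n))\<^sup>2" for n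
    unfolding t_def by (simp add: divide_right_mono)
  have "summable t"
    by (rule summable_comparison_test[OF _ summable_inverse_Suc_squared])
       (use t_le assms in \<open>auto simp: t_def\<close>)
  then have split: "suminf t = (\<Sum>n. t (n + N)) + (\<Sum>i<N. t i)"
    by (rule suminf_split_initial_segment)
  have head: "(\<Sum>i<N. t i) \<le> u * (1 - ln u)"
  proof -
    have "(\<Sum>i<N. t i) \<le> u * harm N"
      unfolding t_def using exp_series_head_le_harm assms by simp
    also have "\<dots> \<le> u * (1 + ln (real N))"
      using euler_mascheroni_sequence_decreasing[of 1 N] N assms by (simp add: harm_def)
    also have "\<dots> \<le> u * (1 - ln u)"
    proof -
      have "ln (real N) \<le> ln (1/u)" using N assms by simp
      then show ?thesis using assms by (simp add: ln_div)
    qed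
    finally show ?thesis .
  qed
  have "(\<Sum>n. t (n + N)) \<le> (\<Sum>n. 1 / (real (Suc (n + N)))\<^sup>2)"
    by (intro suminf_le t_le summable_ignore_initial_segment[OF \<open>summable t\<close>])
       (use summable_ignore_initial_segment[OF summable_inverse_Suc_squared, of N] in simp)
  also have "\<dots> \<le> 1 / real N"
    by (rule inverse_square_tail_le[OF N(1)])
  also have "1 / real N \<le> 2 * u"
  proof -
    have "1 - u < u * real N" "u \<le> u * real N"
      using N assms by (simp_all add: field_simps)
    then show ?thesis using N by (simp add: field_simps)
  qed
  finally have "suminf t \<le> 2 * u + u * (1 - ln u)" using split head by linarith
  also have "\<dots> \<le> 3 * logmod u"
    using assms mult_nonneg_nonpos[of u "ln u"] by (simp add: logmod_def algebra_simps)
  finally show ?thesis unfolding t_def .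
qed

lemma R1_series_omega_bound:
  assumes "-1 \<le> v" "v < 0"
  shows "- 3 * logmod (- v) \<le> R1_series v \<and> R1_series v < 0"
proof -
  have "(\<lambda>n. - ((exp (v * real (Suc n)) - 1) / (real (Suc n))\<^sup>2)) sums (- R1_series v)"
    unfolding R1_series_def using assms by (intro sums_minus summable_sums R1_series_summable) simp
  then have sum: "(\<lambda>n. (1 - exp (v * real (Suc n))) / (real (Suc n))\<^sup>2) sums (- R1_series v)"
    by (simp add: minus_divide_left)
  have "- R1_series v \<le> 3 * logmod (- v)"
    using R1_series_neg_bound[of "- v"] sums_unique[OF sum] assms by simp
  moreover have "0 < - R1_series v"
    unfolding sums_unique[OF sum]
    by (rule suminf_pos[OF sums_summable[OF sum]]) (use assms in \<open>simp add: mult_neg_pos\<close>)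
  ultimately show ?thesis by simp
qed

section \<open>Osgood's criterion for the modulus omega\<close>

lemma loglog_deriv:
  assumes "-1 \<le> v" "v < 0"
  shows "((\<lambda>v. ln (1 - ln (- v))) has_real_derivative 1 / logmod (- v)) (at v)"
proof -
  have "0 < 1 - ln (- v)" using one_minus_ln_pos[of "- v"] assms by simp
  then show ?thesis
    using assms by (auto intro!: derivative_eq_intros simp: logmod_def field_simps)
qed

lemma loglog_at_top: "filterlim (\<lambda>v. ln (1 - ln (- v))) at_top (at_left (0::real))"
proof -
  have "filterlim (\<lambda>v::real. - v) (at_right 0) (at_left 0)"
    by (simp add: filterlim_at_left_to_right filterlim_ident)
  then have "filterlim (\<lambda>v::real. - ln (- v)) at_top (at_left 0)"
    using filterlim_compose[OF ln_at_0] by (simp add: filterlim_uminus_at_bot)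
  then have "filterlim (\<lambda>v::real. 1 + - ln (- v)) at_top (at_left 0)"
    by (rule filterlim_tendsto_add_at_top[OF tendsto_const])
  then show ?thesis
    using filterlim_compose[OF ln_at_top] by simp
qed

lemma osgood_divergence:
  fixes F :: "real \<Rightarrow> real"
  assumes "K > 0" and cont: "continuous_on {-1..<0} F"
    and bounds: "\<And>v. -1 \<le> v \<Longrightarrow> v < 0 \<Longrightarrow> - K * logmod (- v) \<le> F v \<and> F v < 0"
  shows "filterlim (\<lambda>b. integral {-1..b} (\<lambda>u. 1 / F u)) at_bot (at_left 0)"
proof (rule filterlim_at_bot_mono)
  define L where "L v = ln (1 - ln (- v))" for v :: real
  show "filterlim (\<lambda>b. - L b / K) at_bot (at_left 0)"
    using filterlim_tendsto_pos_mult_at_top[OF tendsto_const[of "1 / K"] _ loglog_at_top] \<open>K > 0\<close>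
    by (simp add: L_def filterlim_uminus_at_top)
  have "integral {-1..b} (\<lambda>u. 1 / F u) \<le> - L b / K" if b: "-1 < b" "b < 0" for b
  proof -
    have prim: "((\<lambda>v. - 1 / (K * logmod (- v))) has_integral (- L b / K - (- L (-1) / K))) {-1..b}"
    proof (rule fundamental_theorem_of_calculus)
      fix x assume "x \<in> {-1..b}"
      then have "((\<lambda>v. - L v / K) has_real_derivative - (1 / logmod (- x)) / K) (at x)"
        unfolding L_def using b by (intro DERIV_cdivide DERIV_minus loglog_deriv) auto
      moreover have "- (1 / logmod (- x)) / K = - 1 / (K * logmod (- x))"
        by (simp add: mult.commute)
      ultimately have "((\<lambda>v. - L v / K) has_real_derivative - 1 / (K * logmod (- x))) (at x)"
        by (rule DERIV_cong)
      then show "((\<lambda>v. - L v / K) has_vector_derivative - 1 / (K * logmod (- x))) (at x within {-1..b})"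
        unfolding has_real_derivative_iff_has_vector_derivative by (rule has_vector_derivative_at_within)
    qed (use b in simp)
    have "integral {-1..b} (\<lambda>u. 1 / F u) \<le> integral {-1..b} (\<lambda>v. - 1 / (K * logmod (- v)))"
    proof (rule integral_le)
      show "(\<lambda>u. 1 / F u) integrable_on {-1..b}"
        using b bounds by (intro integrable_continuous_interval continuous_on_divide
            continuous_on_subset[OF cont]) force+
      show "(\<lambda>v. - 1 / (K * logmod (- v))) integrable_on {-1..b}" using prim by blast
      fix x assume "x \<in> {-1..b}"
      then have "- K * logmod (- x) \<le> F x" "F x < 0" "0 < K * logmod (- x)"
        using bounds[of x] b \<open>K > 0\<close> logmod_pos[of "- x"] by auto
      then show "1 / F x \<le> - 1 / (K * logmod (- x))" by (simp add: divide_simps)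
    qed
    also have "\<dots> = - L b / K" using integral_unique[OF prim] by (simp add: L_def)
    finally show ?thesis .
  qed
  then show "\<forall>\<^sub>F b in at_left 0. integral {-1..b} (\<lambda>u. 1 / F u) \<le> - L b / K"
    using eventually_at_left_real[of "-1" 0] by (auto elim!: eventually_mono)
qed

lemma last_zero_before:
  fixes \<phi> :: "real \<Rightarrow> real"
  assumes cont: "continuous_on {0..t1} \<phi>" and "\<phi> 0 = 0" "t1 \<ge> 0" "\<phi> t1 \<noteq> 0"
  obtains a where "0 \<le> a" "a < t1" "\<phi> a = 0" "\<And>t. a < t \<Longrightarrow> t \<le> t1 \<Longrightarrow> \<phi> t \<noteq> 0"
proof -
  define S where "S = {t \<in> {0..t1}. \<phi> t = 0}"
  have "closed S" unfolding S_def by (rule continuous_closed_preimage_constant[OF cont]) simp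
  moreover have "0 \<in> S" "bdd_above S" using assms unfolding S_def by (auto intro: bdd_aboveI[of _ t1])
  ultimately have "Sup S \<in> S" using closed_contains_Sup by blast
  then have "0 \<le> Sup S" "Sup S \<le> t1" "\<phi> (Sup S) = 0" unfolding S_def by auto
  moreover from this \<open>\<phi> t1 \<noteq> 0\<close> have "Sup S < t1" by (cases "Sup S = t1") auto
  moreover have "\<phi> t \<noteq> 0" if "Sup S < t" "t \<le> t1" for t
    using cSup_upper[OF _ \<open>bdd_above S\<close>, of t] that \<open>0 \<le> Sup S\<close> unfolding S_def by force
  ultimately show ?thesis by (intro that) auto
qed

lemma loglog_solution_mono:
  fixes \<phi> F :: "real \<Rightarrow> real"
  assumes lower: "\<And>v. -1 \<le> v \<Longrightarrow> v < 0 \<Longrightarrow> - K * logmod (- v) \<le> F v"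
    and ode: "\<And>t. a < t \<Longrightarrow> t < b \<Longrightarrow> (\<phi> has_real_derivative F (\<phi> t)) (at t)"
    and range: "\<And>t. a < t \<Longrightarrow> t < b \<Longrightarrow> -1 \<le> \<phi> t \<and> \<phi> t < 0"
    and "a < s" "s \<le> r" "r < b"
  shows "ln (1 - ln (- \<phi> s)) + K * s \<le> ln (1 - ln (- \<phi> r)) + K * r"
proof -
  define G where "G t = ln (1 - ln (- \<phi> t)) + K * t" for t
  have G_deriv: "(G has_real_derivative 1 / logmod (- \<phi> t) * F (\<phi> t) + K) (at t)"
    if "a < t" "t < b" for t
  proof -
    have "-1 \<le> \<phi> t" "\<phi> t < 0" using range[OF that] by auto
    from DERIV_chain2[OF loglog_deriv[OF this] ode[OF that]]
    show ?thesis unfolding G_def[abs_def] by (rule DERIV_add[OF _ DERIV_cmult_Id])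
  qed
  have G_deriv_nonneg: "0 \<le> 1 / logmod (- \<phi> t) * F (\<phi> t) + K" if "a < t" "t < b" for t
  proof -
    have "0 < logmod (- \<phi> t)" using range[OF that] logmod_pos by simp
    moreover have "- K * logmod (- \<phi> t) \<le> F (\<phi> t)" using lower range[OF that] by auto
    ultimately have "- K \<le> F (\<phi> t) / logmod (- \<phi> t)" by (simp add: le_divide_eq)
    then show ?thesis by simp
  qed
  show ?thesis unfolding G_def[symmetric]
  proof (rule DERIV_nonneg_imp_increasing_open[of s r G])
    show "\<exists>y. (G has_real_derivative y) (at x) \<and> 0 \<le> y" if "s < x" "x < r" for x
    proof -
      have "a < x" "x < b" using that \<open>a < s\<close> \<open>r < b\<close> by auto
      from G_deriv[OF this] G_deriv_nonneg[OF this] show ?thesis by blast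
    qed
    show "continuous_on {s..r} G"
    proof (rule DERIV_continuous_on)
      fix x assume "x \<in> {s..r}"
      then have "a < x" "x < b" using \<open>a < s\<close> \<open>r < b\<close> by auto
      from G_deriv[OF this]
      show "(G has_real_derivative 1 / logmod (- \<phi> x) * F (\<phi> x) + K) (at x within {s..r})"
        by (rule has_field_derivative_at_within)
    qed
  qed (rule \<open>s \<le> r\<close>)
qed

lemma approach_zero_from_below:
  fixes \<phi> :: "real \<Rightarrow> real"
  assumes lim: "(\<phi> \<longlongrightarrow> 0) (at_right a)"
    and neg: "\<And>t. a < t \<Longrightarrow> t \<le> t1 \<Longrightarrow> \<phi> t < 0" and "a < t1"
  shows "filterlim \<phi> (at_left 0) (at_right a)"
    and "\<exists>b>a. \<forall>t>a. t < b \<longrightarrow> -1 \<le> \<phi> t \<and> \<phi> t < 0"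
proof -
  have near: "\<forall>\<^sub>F t in at_right a. \<phi> t < 0"
    using eventually_at_right_real[OF \<open>a < t1\<close>] by eventually_elim (use neg in auto)
  with lim show "filterlim \<phi> (at_left 0) (at_right a)"
    by (rule tendsto_imp_filterlim_at_left)
  have "\<forall>\<^sub>F t in at_right a. -1 < \<phi> t"
    using order_tendstoD(1)[OF lim, of "-1"] by simp
  with near have "\<forall>\<^sub>F t in at_right a. -1 \<le> \<phi> t \<and> \<phi> t < 0"
    by eventually_elim auto
  then show "\<exists>b>a. \<forall>t>a. t < b \<longrightarrow> -1 \<le> \<phi> t \<and> \<phi> t < 0"
    unfolding eventually_at_right[OF \<open>a < t1\<close>] .
qed

text \<open>Otherwise
  L(phi) + K t is nondecreasing just after the last zero a, so L(phi) stays bounded as t -> a+,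
  whereas phi -> 0- forces L(phi) -> +infinity.\<close>
lemma osgood_uniqueness:
  fixes \<phi> F :: "real \<Rightarrow> real"
  assumes "K \<ge> 0"
    and lower: "\<And>v. -1 \<le> v \<Longrightarrow> v < 0 \<Longrightarrow> - K * logmod (- v) \<le> F v"
    and start: "\<phi> 0 = 0"
    and nonpos: "\<And>t. t \<ge> 0 \<Longrightarrow> \<phi> t \<le> 0"
    and ode: "\<And>t. t \<ge> 0 \<Longrightarrow> (\<phi> has_real_derivative F (\<phi> t)) (at t within {0..})"
    and "t1 \<ge> 0"
  shows "\<phi> t1 = 0"
proof (rule ccontr)
  assume "\<phi> t1 \<noteq> 0"
  have cont: "continuous_on {0..} \<phi>" by (rule DERIV_continuous_on[OF ode]) simp
  have "continuous_on {0..t1} \<phi>"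
    by (rule continuous_on_subset[OF cont]) auto
  then obtain a where a: "0 \<le> a" "a < t1" "\<phi> a = 0"
    and nonzero: "\<And>t. a < t \<Longrightarrow> t \<le> t1 \<Longrightarrow> \<phi> t \<noteq> 0"
    using last_zero_before start \<open>t1 \<ge> 0\<close> \<open>\<phi> t1 \<noteq> 0\<close> by blast
  have neg: "\<phi> t < 0" if "a < t" "t \<le> t1" for t
    using nonzero[OF that] nonpos[of t] that a(1) by force
  have "(\<phi> \<longlongrightarrow> \<phi> a) (at a within {0..})"
    using cont a(1) unfolding continuous_on_def by simp
  then have "(\<phi> \<longlongrightarrow> \<phi> a) (at_right a)"
    by (rule tendsto_within_subset) (use a in auto)
  then have lim: "(\<phi> \<longlongrightarrow> 0) (at_right a)"
    using a(3) by simp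
  obtain b where "a < b" and range: "\<And>t. a < t \<Longrightarrow> t < b \<Longrightarrow> -1 \<le> \<phi> t \<and> \<phi> t < 0"
    using approach_zero_from_below(2)[OF lim neg \<open>a < t1\<close>] by blast
  have ode_open: "(\<phi> has_real_derivative F (\<phi> t)) (at t)" if "a < t" "t < b" for t
    using ode[of t] that a(1) at_within_interior[of t "{0..}"] by simp
  define r where "r = (a + b) / 2"
  have "a < r" "r < b" using \<open>a < b\<close> by (auto simp: r_def)
  have bounded: "ln (1 - ln (- \<phi> s)) \<le> ln (1 - ln (- \<phi> r)) + K * r" if "a < s" "s < r" for s
  proof -
    have "ln (1 - ln (- \<phi> s)) + K * s \<le> ln (1 - ln (- \<phi> r)) + K * r"
      by (rule loglog_solution_mono[OF lower ode_open range]) (use that \<open>r < b\<close> in auto)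
    moreover have "0 \<le> K * s" using \<open>K \<ge> 0\<close> a(1) that by simp
    ultimately show ?thesis by linarith
  qed
  have "filterlim (\<lambda>t. ln (1 - ln (- \<phi> t))) at_top (at_right a)"
    using filterlim_compose[OF loglog_at_top approach_zero_from_below(1)[OF lim neg \<open>a < t1\<close>]] .
  then have "\<forall>\<^sub>F s in at_right a. ln (1 - ln (- \<phi> r)) + K * r < ln (1 - ln (- \<phi> s))"
    by (simp add: filterlim_at_top_dense)
  moreover have "\<forall>\<^sub>F s in at_right a. a < s \<and> s < r"
    using eventually_at_right_real[OF \<open>a < r\<close>] by simp
  ultimately have "\<forall>\<^sub>F s in at_right a. False"
    by eventually_elim (use bounded in force)
  then show False by (simp add: trivial_limit_at_right_real)
qed

section \<open>Conservativeness\<close>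

text \<open>Setting u = 0 in the Laplace transform identifies the total mass of p t x.\<close>
lemma affine_transition_mass:
  assumes "affine_transition \<alpha>0 \<alpha>1 \<beta>0 \<beta>1 \<gamma>0 \<gamma>1 \<kappa>0 \<kappa>1 p \<psi>0 \<psi>" "t \<ge> 0" "x \<ge> 0"
  shows "emeasure (p t x) {0..} = ennreal (exp (\<psi>0 t 0 + \<psi> t 0 * x))"
    and "exp (\<psi>0 t 0 + \<psi> t 0 * x) \<le> 1"
proof -
  have "sets (p t x) = sets borel \<and> emeasure (p t x) (UNIV - {0..}) = 0 \<and> emeasure (p t x) UNIV \<le> 1 \<and>
      (\<forall>u \<le> 0. (\<integral>\<xi>. exp (u * \<xi>) \<partial>(p t x)) = exp (\<psi>0 t u + \<psi> t u * x))"
    using assms unfolding affine_transition_def by blast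
  then have sets: "sets (p t x) = sets borel" and null: "emeasure (p t x) (UNIV - {0..}) = 0"
    and fin: "emeasure (p t x) UNIV \<le> 1"
    and laplace0: "(\<integral>\<xi>. exp (0 * \<xi>) \<partial>(p t x)) = exp (\<psi>0 t 0 + \<psi> t 0 * x)"
    by auto
  have "emeasure (p t x) {0..} = emeasure (p t x) UNIV"
    using emeasure_Diff_null_set[of "UNIV - {0..}" "p t x" UNIV] null sets
    by (simp add: null_setsI Diff_Diff_Int)
  also have "\<dots> = ennreal (measure (p t x) UNIV)"
    using fin by (intro emeasure_eq_ennreal_measure) (auto simp: top_unique)
  also have "\<dots> = ennreal (exp (\<psi>0 t 0 + \<psi> t 0 * x))"
    using laplace0 sets_eq_imp_space_eq[OF sets] by simp
  finally show mass: "emeasure (p t x) {0..} = ennreal (exp (\<psi>0 t 0 + \<psi> t 0 * x))" .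
  show "exp (\<psi>0 t 0 + \<psi> t 0 * x) \<le> 1"
    using mass \<open>emeasure (p t x) {0..} = emeasure (p t x) UNIV\<close> fin by simp
qed

lemma R0_zero: "R 0 0 0 (null_measure borel) u = 0"
  unfolding R_def by simp

text \<open>The process is conservative: psi0(.,0) is constant 0 since R_0 = 0, the mass bound gives
  psi(.,0) <= 0, and Osgood uniqueness with the omega-bound for R_1 gives psi(.,0) = 0.\<close>
theorem conservative_mu:
  assumes A: "affine_transition 0 0 0 beta1 0 0 (null_measure borel) mu p \<psi>0 \<psi>"
  shows "conservative p"
proof -
  have init: "\<psi> 0 0 = 0" "\<psi>0 0 0 = 0"
    and riccati: "\<And>t. t \<ge> 0 \<Longrightarrow> ((\<lambda>s. \<psi> s 0) has_real_derivative R 0 beta1 0 mu (\<psi> t 0)) (at t within {0..})"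
    and riccati0: "\<And>t. t \<ge> 0 \<Longrightarrow> ((\<lambda>s. \<psi>0 s 0) has_real_derivative 0) (at t within {0..})"
    using A unfolding affine_transition_def R0_zero by auto
  have "((\<lambda>s. \<psi>0 s 0) has_real_derivative 0) (at t within {0..})" if "t \<in> {0..}" for t
    using riccati0 that by simp
  from has_field_derivative_zero_constant[OF convex_real_interval(1) this]
  obtain c where "\<forall>t\<in>{0..}. \<psi>0 t 0 = c" by blast
  then have \<psi>0_zero: "\<psi>0 t 0 = 0" if "t \<ge> 0" for t
    using init that by force
  have \<psi>_nonpos: "\<psi> t 0 \<le> 0" if "t \<ge> 0" for t
    using affine_transition_mass(2)[OF A that zero_le_one] \<psi>0_zero[OF that] by simp
  have \<psi>_zero: "\<psi> t 0 = 0" if "t \<ge> 0" for t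
  proof (rule osgood_uniqueness[where K=3 and F=R1_series and \<phi>="\<lambda>s. \<psi> s 0"])
    show "\<And>v. - 1 \<le> v \<Longrightarrow> v < 0 \<Longrightarrow> - 3 * logmod (- v) \<le> R1_series v"
      using R1_series_omega_bound by blast
    show "((\<lambda>s. \<psi> s 0) has_real_derivative R1_series (\<psi> s 0)) (at s within {0..})" if "s \<ge> 0" for s
      using riccati[OF that] R1_eq_series[OF \<psi>_nonpos[OF that]] by simp
  qed (use init \<psi>_nonpos that in auto)
  show ?thesis
    unfolding conservative_def using affine_transition_mass(1)[OF A] \<psi>0_zero \<psi>_zero by simp
qed

lemma integral_inverse_R1_diverges:
  "filterlim (\<lambda>b. integral {-1..b} (\<lambda>u. 1 / R 0 beta1 0 mu u)) at_bot (at_left 0)"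
proof (rule osgood_divergence[of 3])
  have "continuous_on {-1..<0} R1_series"
    by (rule continuous_on_subset[OF R1_series_continuous]) auto
  then show "continuous_on {-1..<0} (R 0 beta1 0 mu)"
    by (rule continuous_on_eq) (simp add: R1_eq_series)
qed (use R1_series_omega_bound R1_eq_series in auto)

theorem mainTheorem3:
  shows "(\<integral>\<xi>. h \<xi> \<partial>mu) = beta1
    \<and> admissible 0 0 0 beta1 0 0 (null_measure borel) mu
    \<and> (\<integral>\<^sup>+\<xi>. ennreal (min \<bar>\<xi>\<bar> (\<xi>\<^sup>2)) \<partial>mu) = \<infinity>
    \<and> (\<forall>p \<psi>0 \<psi>. affine_transition 0 0 0 beta1 0 0 (null_measure borel) mu p \<psi>0 \<psi>
          \<longrightarrow> conservative p)
    \<and> (\<forall>u. R 0 0 0 (null_measure borel) u = 0)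
    \<and> (\<forall>u \<le> 0. R 0 beta1 0 mu u = (\<Sum>n. (exp (u * real (Suc n)) - 1) / (real (Suc n))\<^sup>2))
    \<and> filterlim (\<lambda>b. integral {-1..b} (\<lambda>u. 1 / R 0 beta1 0 mu u)) at_bot (at_left 0)"
  using integral_h_mu admissible_mu nn_integral_mu_moment conservative_mu R0_zero
    R1_eq_series[unfolded R1_series_def] integral_inverse_R1_diverges
  by blast

end
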